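(* For every pair of positive integers $g,k$, every graph $G_{g,k}$ obtained by the construction described in the context satisfies $\chi(G_{g,k})\ge k$.
   Context: Hypergraph notions. A closed walk of length $\ell$ in a hypergraph $H$ is a sequence $v_0F_0v_1F_1\ldots F_{\ell-1}v_0$ with $v_i,v_{i+1}\in F_i$ for all $0\le i<\ell$ (indices mod $\ell$), $F_i\ne F_{i+1}$ for all $i$ (indices mod $\ell$), and $v_1,\ldots,v_{\ell-1}$ pairwise distinct. An $r$-uniform hypergraph $H$ is tranquil, witnessed by labellings $\lambda=\{\lambda_F\}_{F\in E(H)}$ with $\lambda_F:F\to\{1,\dots,r\}$, if for every closed walk $W=v_0F_0\ldots F_{\ell-1}v_0$ the multigraph on $\{1,\dots,r\}$ with edge multiset $\{\lambda_{F_i}(v_i)\lambda_{F_i}(v_{i+1}):0\le i<\ell\}$ is bridgeless. The chromatic number of a hypergraph is the least number of colours in a vertex colouring with no monochromatic hyperedge; its girth is the length of a shortest Berge cycle (distinct hyperedges $F_1,\dots,F_\ell$ and distinct vertices $x_1,\dots,x_\ell$ with $x_i\in F_i\cap F_{i+1}$, indices mod $\ell$). Construction. Fix a positive integer $g$. $G_{g,1}$ is a single vertex. For $k\ge 2$, given a graph $G_{g,k-1}$ obtained by the construction, with vertex set identified with $\{1,\dots,r\}$, take a finite tranquil $r$-uniform hypergraph $H$ with chromatic number at least $k$ and girth at least $\lceil g/3\rceil$, together with tranquility-witnessing labellings $\lambda_F$, each $\lambda_F:F\to\{1,\dots,r\}$ a bijection. The graph $G_{g,k}$ consists of an independent set $T$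 with a bijection $\nu:T\to V(H)$, together with, for each hyperedge $F\in E(H)$, a disjoint copy $G_F$ of $G_{g,k-1}$; for each $F\in E(H)$ one adds the perfect matching between $G_F$ and $\nu^{-1}(F)$ joining the vertex of $G_F$ corresponding to $i\in\{1,\dots,r\}$ to the vertex $t\in\nu^{-1}(F)$ with $\lambda_F(\nu(t))=i$. No other edges are present. $\chi$ denotes the (vertex) chromatic number of a graph. *)

theory Defs
  imports Complex_Main
begin

definition uniform_hypergraph :: "'a set \<Rightarrow> 'a set set \<Rightarrow> nat \<Rightarrow> bool" where
  "uniform_hypergraph T EH r \<longleftrightarrow> finite T \<and> (\<forall>F\<in>EH. F \<subseteq> T \<and> card F = r)"

definition closed_walk ::
  "'a set set \<Rightarrow> nat \<Rightarrow> (nat \<Rightarrow> 'a) \<Rightarrow> (nat \<Rightarrow> 'a set) \<Rightarrow> bool" where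
  "closed_walk EH l v F \<longleftrightarrow> 0 < l \<and>
     (\<forall>i<l. F i \<in> EH \<and> v i \<in> F i \<and> v ((i + 1) mod l) \<in> F i \<and> F i \<noteq> F ((i + 1) mod l))
     \<and> inj_on v {1..<l}"

text \<open>A multigraph given by the edge list (a i, b i), i < l, is bridgeless: no edge
  whose endpoints become disconnected once that single edge is deleted
  (loops are never bridges).\<close>
definition bridgeless_multigraph :: "nat \<Rightarrow> (nat \<Rightarrow> nat) \<Rightarrow> (nat \<Rightarrow> nat) \<Rightarrow> bool" where
  "bridgeless_multigraph l a b \<longleftrightarrow>
     (\<forall>j<l. (a j, b j) \<in> ({(a i, b i) | i. i < l \<and> i \<noteq> j} \<union>
                            {(b i, a i) | i. i < l \<and> i \<noteq> j})\<^sup>*)"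

definition tranquil :: "'a set \<Rightarrow> 'a set set \<Rightarrow> ('a set \<Rightarrow> 'a \<Rightarrow> nat) \<Rightarrow> bool" where
  "tranquil T EH lam \<longleftrightarrow>
     (\<forall>l v F. closed_walk EH l v F \<longrightarrow>
        bridgeless_multigraph l (\<lambda>i. lam (F i) (v i)) (\<lambda>i. lam (F i) (v ((i + 1) mod l))))"

definition hyper_chromatic_ge :: "'a set \<Rightarrow> 'a set set \<Rightarrow> nat \<Rightarrow> bool" where
  "hyper_chromatic_ge T EH k \<longleftrightarrow>
     (\<forall>n<k. \<forall>c :: 'a \<Rightarrow> nat. (\<forall>x\<in>T. c x < n) \<longrightarrow>
        (\<exists>F\<in>EH. \<forall>x\<in>F. \<forall>y\<in>F. c x = c y))"

definition berge_cycle :: "'a set set \<Rightarrow> nat \<Rightarrow> (nat \<Rightarrow> 'a set) \<Rightarrow> (nat \<Rightarrow> 'a) \<Rightarrow> bool" where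
  "berge_cycle EH l F x \<longleftrightarrow> 2 \<le> l \<and> inj_on F {..<l} \<and> inj_on x {..<l} \<and>
     (\<forall>i<l. F i \<in> EH \<and> x i \<in> F i \<and> x i \<in> F ((i + 1) mod l))"

definition girth_ge :: "'a set set \<Rightarrow> nat \<Rightarrow> bool" where
  "girth_ge EH m \<longleftrightarrow> (\<forall>l F x. berge_cycle EH l F x \<longrightarrow> m \<le> l)"

definition chromatic_number :: "'a set \<Rightarrow> ('a \<times> 'a) set \<Rightarrow> nat" where
  "chromatic_number V E =
     (LEAST n. \<exists>c :: 'a \<Rightarrow> nat. (\<forall>x\<in>V. c x < n) \<and> (\<forall>(x, y)\<in>E. c x \<noteq> c y))"

text \<open>The hypergraph H is taken with vertex set T itself (i.e. nu is the identity);
  phi F embeds G_{g,k-1} as the copy G_F; sigma identifies V(G_{g,k-1}) with {1..r}.\<close>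
inductive constructed :: "nat \<Rightarrow> nat \<Rightarrow> 'a set \<Rightarrow> ('a \<times> 'a) set \<Rightarrow> bool" for g where
  base: "constructed g 1 {v} {}"
| step: "\<lbrakk> 2 \<le> k;
           constructed g (k - 1) V' E';
           r = card V';
           bij_betw \<sigma> V' {1..r};
           uniform_hypergraph T EH r;
           \<forall>F\<in>EH. bij_betw (lam F) F {1..r};
           tranquil T EH lam;
           hyper_chromatic_ge T EH k;
           girth_ge EH (nat \<lceil>real g / 3\<rceil>);
           \<forall>F\<in>EH. inj_on (\<phi> F) V' \<and> \<phi> F ` V' \<inter> T = {};
           \<forall>F\<in>EH. \<forall>F'\<in>EH. F \<noteq> F' \<longrightarrow> \<phi> F ` V' \<inter> \<phi> F' ` V' = {};
           V = T \<union> (\<Union>F\<in>EH. \<phi> F ` V');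
           E = {(\<phi> F x, \<phi> F y) | F x y. F \<in> EH \<and> (x, y) \<in> E'}
             \<union> {(\<phi> F x, t) | F x t. F \<in> EH \<and> x \<in> V' \<and> t \<in> F \<and> lam F t = \<sigma> x}
             \<union> {(t, \<phi> F x) | F x t. F \<in> EH \<and> x \<in> V' \<and> t \<in> F \<and> lam F t = \<sigma> x} \<rbrakk>
         \<Longrightarrow> constructed g k V E"

end

theory Submission
  imports Defs
begin

text \<open>Suppose G_{g,k} had a proper colouring with n < k colours. Its
  restriction to T colours H, whose chromatic number is at least k, so some hyperedge F is
  monochromatic, say of colour a. The perfect matching between F and the copy G_F of
  G_{g,k-1} makes every vertex of G_F adjacent to a vertex of colour a, so G_F is properly
  coloured by the remaining n - 1 colours, contradicting the induction hypothesis.\<close>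

definition colouring :: "'a set \<Rightarrow> ('a \<times> 'a) set \<Rightarrow> nat \<Rightarrow> ('a \<Rightarrow> nat) \<Rightarrow> bool" where
  "colouring V E n c \<longleftrightarrow> (\<forall>x\<in>V. c x < n) \<and> (\<forall>(x, y)\<in>E. c x \<noteq> c y)"

definition finite_loopless_graph :: "'a set \<Rightarrow> ('a \<times> 'a) set \<Rightarrow> bool" where
  "finite_loopless_graph V E \<longleftrightarrow> finite V \<and> E \<subseteq> V \<times> V \<and> irrefl E"

lemma ex_colouring_card:
  assumes "finite_loopless_graph V E"
  shows "\<exists>c. colouring V E (card V) c"
proof -
  have fin: "finite V" and sub: "E \<subseteq> V \<times> V" and irr: "irrefl E"
    using assms by (auto simp: finite_loopless_graph_def)
  obtain f where f: "bij_betw f V {..<card V}"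
    using ex_bij_betw_finite_nat[OF fin] atLeast0LessThan by metis
  have "\<forall>(x, y)\<in>E. f x \<noteq> f y"
  proof clarify
    fix x y assume "(x, y) \<in> E" "f x = f y"
    with sub irr f show False by (auto simp: irrefl_def bij_betw_def inj_on_def)
  qed
  with f show ?thesis by (auto simp: colouring_def bij_betw_def)
qed

lemma le_chromatic_number:
  assumes "finite_loopless_graph V E"
    and "\<And>n c. colouring V E n c \<Longrightarrow> k \<le> n"
  shows "k \<le> chromatic_number V E"
proof -
  have "\<exists>c. colouring V E (chromatic_number V E) c"
    unfolding chromatic_number_def colouring_def[symmetric]
    by (rule LeastI_ex) (use ex_colouring_card[OF assms(1)] in blast)
  with assms(2) show ?thesis by blast
qed

lemma colouring_edge:
  assumes "colouring V E n c" "(x, y) \<in> E"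
  shows "c x \<noteq> c y"
  using assms by (auto simp: colouring_def)

lemma colouring_comp:
  assumes "colouring V E n c"
    and "f ` V' \<subseteq> V"
    and "\<And>x y. (x, y) \<in> E' \<Longrightarrow> (f x, f y) \<in> E"
  shows "colouring V' E' n (c \<circ> f)"
  using assms by (fastforce simp: colouring_def)

lemma colouring_omit_colour:
  assumes "colouring V E n c" "E \<subseteq> V \<times> V"
    and "\<forall>x\<in>V. c x \<noteq> a" "a < n"
  shows "colouring V E (n - 1) (\<lambda>x. if a < c x then c x - 1 else c x)"
proof -
  define d where "d i = (if a < i then i - 1 else i)" for i :: nat
  have d_less: "d i < n - 1" if "i < n" "i \<noteq> a" for i
    using that \<open>a < n\<close> by (auto simp: d_def)
  have d_inj: "d i \<noteq> d j" if "i \<noteq> j" "i \<noteq> a" "j \<noteq> a" for i j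
    using that by (auto simp: d_def)
  have "(\<lambda>x. if a < c x then c x - 1 else c x) = d \<circ> c"
    by (simp add: d_def fun_eq_iff)
  moreover have "colouring V E (n - 1) (d \<circ> c)"
    using assms d_less d_inj unfolding colouring_def by fastforce
  ultimately show ?thesis by simp
qed

lemma constructed_finite_loopless_graph:
  assumes "constructed g k V E"
  shows "finite_loopless_graph V E"
  using assms
proof (induction rule: constructed.induct)
  case (base v)
  then show ?case by (simp add: finite_loopless_graph_def irrefl_def)
next
  case (step k V' E' r \<sigma> T EH lam \<phi> V E)
  have T: "finite T" "\<forall>F\<in>EH. F \<subseteq> T"
    using step.hyps(5) by (auto simp: uniform_hypergraph_def)
  then have "finite EH"
    by (meson Pow_iff finite_Pow_iff finite_subset subsetI)
  then have "finite V"
    using step T by (auto simp: finite_loopless_graph_def)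
  moreover have "E \<subseteq> V \<times> V"
    using step.hyps(12,13) step.IH T by (auto simp: finite_loopless_graph_def)
  moreover have "irrefl E"
  proof (unfold irrefl_def, intro allI notI)
    fix z assume "(z, z) \<in> E"
    then consider (copy) F x y where "F \<in> EH" "(x, y) \<in> E'" "\<phi> F x = \<phi> F y"
      | (matching) F x where "F \<in> EH" "x \<in> V'" "\<phi> F x \<in> T"
      using step.hyps(13) T by blast
    then show False
    proof cases
      case copy
      with step.IH have "x \<in> V'" "y \<in> V'" "(x, y) \<in> E'" "irrefl E'"
        by (auto simp: finite_loopless_graph_def)
      moreover from copy step.hyps(10) \<open>x \<in> V'\<close> \<open>y \<in> V'\<close> have "x = y"
        by (meson inj_on_def)
      ultimately show False by (simp add: irrefl_def)
    next
      case matching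
      with step.hyps(10) show False by blast
    qed
  qed
  ultimately show ?case by (simp add: finite_loopless_graph_def)
qed

lemma colouring_copy_adjacent_to_monochromatic:
  assumes c: "colouring V E n c" and E': "E' \<subseteq> V' \<times> V'"
    and f: "f ` V' \<subseteq> V" "\<And>x y. (x, y) \<in> E' \<Longrightarrow> (f x, f y) \<in> E"
    and S: "S \<subseteq> V" "\<forall>s\<in>S. \<forall>t\<in>S. c s = c t"
    and adjacent: "\<And>x. x \<in> V' \<Longrightarrow> \<exists>t\<in>S. (f x, t) \<in> E"
  shows "\<exists>c'. colouring V' E' (n - 1) c'"
proof (cases "V' = {}")
  case True
  with E' show ?thesis by (simp add: colouring_def)
next
  case False
  then obtain t\<^sub>0 where "t\<^sub>0 \<in> S"
    using adjacent by blast
  define a where "a = c t\<^sub>0"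
  have "a < n"
    using c \<open>t\<^sub>0 \<in> S\<close> S(1) by (auto simp: colouring_def a_def)
  moreover have "\<forall>x\<in>V'. (c \<circ> f) x \<noteq> a"
  proof
    fix x assume "x \<in> V'"
    then obtain t where "t \<in> S" "(f x, t) \<in> E"
      using adjacent by blast
    then have "c (f x) \<noteq> c t"
      using colouring_edge[OF c] by blast
    moreover have "c t = a"
      using S(2) \<open>t \<in> S\<close> \<open>t\<^sub>0 \<in> S\<close> unfolding a_def by blast
    ultimately show "(c \<circ> f) x \<noteq> a" by simp
  qed
  moreover have "colouring V' E' n (c \<circ> f)"
    using colouring_comp[OF c f] .
  ultimately show ?thesis
    using colouring_omit_colour[OF _ E'] by blast
qed

lemma constructed_colouring_ge:
  assumes "constructed g k V E" "colouring V E n c"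
  shows "k \<le> n"
  using assms
proof (induction arbitrary: n c rule: constructed.induct)
  case (base v)
  then show ?case by (simp add: colouring_def)
next
  case (step k V' E' r \<sigma> T EH lam \<phi> V E)
  show "k \<le> n"
  proof (rule ccontr)
    assume "\<not> k \<le> n"
    then have "n < k" by simp
    moreover have "\<forall>t\<in>T. c t < n"
      using step.prems step.hyps(12) by (simp add: colouring_def)
    ultimately obtain F where F: "F \<in> EH" "\<forall>s\<in>F. \<forall>t\<in>F. c s = c t"
      using step.hyps(8) unfolding hyper_chromatic_ge_def by blast
    have "F \<subseteq> V"
      using step.hyps(5,12) F(1) by (auto simp: uniform_hypergraph_def)
    have adjacent: "\<exists>t\<in>F. (\<phi> F x, t) \<in> E" if "x \<in> V'" for x
    proof -
      have "\<sigma> x \<in> lam F ` F"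
        using step.hyps(4,6) F(1) that by (auto simp: bij_betw_def)
      then obtain t where t: "t \<in> F" "lam F t = \<sigma> x"
        by (metis imageE)
      have "(\<phi> F x, t) \<in> E"
        unfolding step.hyps(13) by (rule UnI1[OF UnI2]) (use F(1) that t in blast)
      with t show ?thesis by blast
    qed
    have copy_edge: "(\<phi> F x, \<phi> F y) \<in> E" if "(x, y) \<in> E'" for x y
      unfolding step.hyps(13) by (rule UnI1[OF UnI1]) (use F(1) that in blast)
    have copy_vertices: "\<phi> F ` V' \<subseteq> V"
      using step.hyps(12) F(1) by blast
    have E': "E' \<subseteq> V' \<times> V'"
      using constructed_finite_loopless_graph[OF step.hyps(2)]
      by (simp add: finite_loopless_graph_def)
    have "\<exists>c'. colouring V' E' (n - 1) c'"
      by (rule colouring_copy_adjacent_to_monochromatic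
          [OF step.prems E' copy_vertices copy_edge \<open>F \<subseteq> V\<close> F(2) adjacent])
    then have "k - 1 \<le> n - 1"
      using step.IH by blast
    with \<open>n < k\<close> \<open>2 \<le> k\<close> show False by linarith
  qed
qed

theorem lemma4p3:
  fixes g k :: nat and V :: "'a set" and E :: "('a \<times> 'a) set"
  assumes "0 < g" and "0 < k"
    and "constructed g k V E"
  shows "k \<le> chromatic_number V E"
  using constructed_finite_loopless_graph[OF assms(3)]
    constructed_colouring_ge[OF assms(3)]
  by (rule le_chromatic_number)

end
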